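(* Let $f$ be either the standard normal density, the standard logistic density, the standard Laplace density, or a generalised hyperbolic density with fixed shape parameter. Consider the linear regression model $y_j={\bf x}_j^\top\bm\beta+\varepsilon_j$, $j=1,\dots,n$, with $\bm\beta\in\mathbb{R}^p$, ${\bf X}=({\bf x}_1^\top,\dots,{\bf x}_n^\top)^\top$ a known $n\times p$ design matrix of full column rank, and $\varepsilon_j\stackrel{i.i.d.}{\sim}\mathrm{TP}(0,\sigma,\gamma;f)$, with prior $\pi(\bm\beta,\sigma,\gamma)\propto\pi(\gamma)/\sigma^{q}$, where $q\ge0$ and $\pi(\gamma)$ is a proper prior on $\Gamma$. Suppose that ${\bf y}=(y_1,\dots,y_n)^\top\notin\mathcal{C}({\bf X})$ (the column space of ${\bf X}$), that $n>p+1-q$, and that $\int_{\Gamma}\frac{\max\{a(\gamma),b(\gamma)\}^{n+q-1}}{[a(\gamma)+b(\gamma)]^n}\pi(\gamma)\,d\gamma<\infty$. Then the posterior distribution of $(\bm\beta,\sigma,\gamma)$ is proper.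
   Context: The two-piece distribution $\mathrm{TP}(\mu,\sigma,\gamma;f)$ for a symmetric density $f$ with mode $0$ has density $g(z)=\frac{2}{\sigma[a(\gamma)+b(\gamma)]}\left[f\!\left(\frac{z-\mu}{\sigma b(\gamma)}\right)I(z<\mu)+f\!\left(\frac{z-\mu}{\sigma a(\gamma)}\right)I(z\ge\mu)\right]$, $z\in\mathbb{R}$, with $\mu\in\mathbb{R}$, $\sigma>0$, $\gamma\in\Gamma\subset\mathbb{R}$, and $a(\cdot),b(\cdot)$ given positive functions on $\Gamma$. The likelihood is $\prod_j g(y_j-{\bf x}_j^\top\bm\beta)$ with $\mu=0$; the posterior is proper if likelihood times prior has finite integral. *)

theory Defs
  imports "HOL-Probability.Probability"
begin

definition logistic_density :: "real \<Rightarrow> real" where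
  "logistic_density x = exp (- x) / (1 + exp (- x))^2"

definition laplace_density :: "real \<Rightarrow> real" where
  "laplace_density x = exp (- \<bar>x\<bar>) / 2"

text \<open>Modified Bessel function of the third kind, via its standard integral representation
  K_nu(z) = int_0^infty exp(-z cosh t) cosh(nu t) dt  (z > 0).\<close>
definition besselK :: "real \<Rightarrow> real \<Rightarrow> real" where
  "besselK \<nu> z = (LINT t:{0<..}|lborel. exp (- z * cosh t) * cosh (\<nu> * t))"

text \<open>Symmetric (beta = 0), location-zero generalised hyperbolic density with
  shape lambda, tail parameter alpha > 0 and scale delta > 0.\<close>
definition gh_density :: "real \<Rightarrow> real \<Rightarrow> real \<Rightarrow> real \<Rightarrow> real" where
  "gh_density lam \<alpha> \<delta> x =
     (\<alpha> / \<delta>) powr lam / (sqrt (2 * pi) * besselK lam (\<delta> * \<alpha>))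
     * besselK (lam - 1/2) (\<alpha> * sqrt (\<delta>^2 + x^2))
     / (sqrt (\<delta>^2 + x^2) / \<alpha>) powr (1/2 - lam)"

definition admissible_base_density :: "(real \<Rightarrow> real) \<Rightarrow> bool" where
  "admissible_base_density f \<longleftrightarrow>
     f = std_normal_density \<or> f = logistic_density \<or> f = laplace_density \<or>
     (\<exists>lam \<alpha> \<delta>. \<alpha> > 0 \<and> \<delta> > 0 \<and> f = gh_density lam \<alpha> \<delta>)"

definition tp_density ::
  "(real \<Rightarrow> real) \<Rightarrow> (real \<Rightarrow> real) \<Rightarrow> (real \<Rightarrow> real) \<Rightarrow> real \<Rightarrow> real \<Rightarrow> real \<Rightarrow> real \<Rightarrow> real" where
  "tp_density f a b \<mu> \<sigma> \<gamma> z =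
     2 / (\<sigma> * (a \<gamma> + b \<gamma>)) *
     (if z < \<mu> then f ((z - \<mu>) / (\<sigma> * b \<gamma>)) else f ((z - \<mu>) / (\<sigma> * a \<gamma>)))"

definition tp_likelihood ::
  "(real \<Rightarrow> real) \<Rightarrow> (real \<Rightarrow> real) \<Rightarrow> (real \<Rightarrow> real) \<Rightarrow> real^'p^'n::finite \<Rightarrow> real^'n
    \<Rightarrow> real^'p \<Rightarrow> real \<Rightarrow> real \<Rightarrow> real" where
  "tp_likelihood f a b X y \<beta> \<sigma> \<gamma> =
     (\<Prod>j\<in>UNIV. tp_density f a b 0 \<sigma> \<gamma> (y $ j - (X *v \<beta>) $ j))"

definition posterior_proper ::
  "(real \<Rightarrow> real) \<Rightarrow> (real \<Rightarrow> real) \<Rightarrow> (real \<Rightarrow> real) \<Rightarrow> real set \<Rightarrow> (real \<Rightarrow> real) \<Rightarrow> real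
    \<Rightarrow> real^'p^'n::finite \<Rightarrow> real^'n \<Rightarrow> bool" where
  "posterior_proper f a b \<Gamma> \<pi> q X y \<longleftrightarrow>
     (\<integral>\<^sup>+ (\<beta>, \<sigma>, \<gamma>). indicator (UNIV \<times> {0<..} \<times> \<Gamma>) (\<beta>, \<sigma>, \<gamma>) *
          ennreal (tp_likelihood f a b X y \<beta> \<sigma> \<gamma> * \<pi> \<gamma> / \<sigma> powr q)
        \<partial>(lborel \<Otimes>\<^sub>M lborel \<Otimes>\<^sub>M lborel)) < \<infinity>"

end

theory Submission
  imports Defs
begin

text \<open>
  Each admissible base density has exponential tails, so the two-piece likelihood is dominated by
  (2C)^n / (\<sigma>(a+b))^n exp(-c |y - X\<beta>|_1 / (\<sigma> max(a,b))). Because X has full rank and y lies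
  outside its column space, |y - X\<beta>| \<ge> \<kappa>(1 + |\<beta>|). Integrating out \<beta> costs a factor
  (\<sigma> max(a,b))^p; the constant part of the exponent leaves exp(-w/(\<sigma> max(a,b))), which makes
  the \<sigma>-integral of \<sigma>^(p-n-q) converge at 0, while n + q - p > 1 makes it converge at infinity.
  What remains is max(a,b)^(n+q-1)/(a+b)^n \<pi>(\<gamma>), integrable by hypothesis.
\<close>

lemma powr_le_const_mult_exp:
  fixes \<mu> \<epsilon> x :: real
  assumes "\<mu> > 0" "\<epsilon> > 0" "x > 0"
  shows "x powr \<mu> \<le> exp (\<mu> * (ln (\<mu> / \<epsilon>) - 1)) * exp (\<epsilon> * x)"
proof -
  have "ln (\<epsilon> * x / \<mu>) \<le> \<epsilon> * x / \<mu> - 1" using assms by (intro ln_le_minus_one) auto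
  moreover have "ln (\<epsilon> * x / \<mu>) = ln x - ln (\<mu> / \<epsilon>)" using assms by (simp add: ln_div ln_mult)
  ultimately have "\<mu> * ln x \<le> \<mu> * (ln (\<mu> / \<epsilon>) - 1) + \<epsilon> * x"
    using assms mult_left_mono[of "ln x" "\<epsilon> * x / \<mu> - 1 + ln (\<mu> / \<epsilon>)" \<mu>] by (simp add: field_simps)
  thus ?thesis using assms by (simp add: powr_def flip: exp_add)
qed

lemma powr_le_mult_exp:
  fixes \<nu> \<epsilon> x0 :: real
  assumes \<epsilon>: "\<epsilon> > 0" and x0: "x0 > 0"
  obtains D where "D \<ge> 0" "\<And>x. x \<ge> x0 \<Longrightarrow> x powr \<nu> \<le> D * exp (\<epsilon> * x)"
proof
  define D where "D = exp (\<nu> * (ln (\<nu> / \<epsilon>) - 1)) + x0 powr \<nu>"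
  show "D \<ge> 0" unfolding D_def by (intro add_nonneg_nonneg) auto
  fix x assume x: "x \<ge> x0"
  show "x powr \<nu> \<le> D * exp (\<epsilon> * x)"
  proof (cases "\<nu> > 0")
    case True
    have "x powr \<nu> \<le> exp (\<nu> * (ln (\<nu> / \<epsilon>) - 1)) * exp (\<epsilon> * x)"
      using x x0 \<epsilon> by (intro powr_le_const_mult_exp True) auto
    also have "\<dots> \<le> D * exp (\<epsilon> * x)"
      unfolding D_def by (intro mult_right_mono) auto
    finally show ?thesis .
  next
    case False
    have "x powr \<nu> \<le> x0 powr \<nu>"
      using False x x0 by (intro powr_mono2') auto
    also have "\<dots> \<le> D" unfolding D_def by simp
    also have "D \<le> D * exp (\<epsilon> * x)"
      using \<open>D \<ge> 0\<close> x x0 \<epsilon> by (simp add: mult_le_cancel_left1)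
    finally show ?thesis .
  qed
qed

section \<open>Exponential tails of the base densities\<close>

definition exponentially_bounded :: "(real \<Rightarrow> real) \<Rightarrow> bool" where
  "exponentially_bounded f \<longleftrightarrow> (\<exists>C>0. \<exists>c>0. \<forall>x. \<bar>f x\<bar> \<le> C * exp (- c * \<bar>x\<bar>))"

lemma exponentially_boundedI:
  assumes "C > 0" "c > 0" "\<And>x. \<bar>f x\<bar> \<le> C * exp (- c * \<bar>x\<bar>)"
  shows "exponentially_bounded f"
  using assms unfolding exponentially_bounded_def by blast

lemma exponentially_bounded_std_normal: "exponentially_bounded std_normal_density"
proof (rule exponentially_boundedI)
  fix x :: real
  have "- x\<^sup>2 / 2 \<le> 1/2 + (- \<bar>x\<bar>)"
    using zero_le_power2[of "\<bar>x\<bar> - 1"] by (simp add: power2_eq_square algebra_simps)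
  hence "exp (- x\<^sup>2 / 2) \<le> exp (1/2) * exp (- \<bar>x\<bar>)" by (simp flip: exp_add)
  thus "\<bar>std_normal_density x\<bar> \<le> exp (1/2) / sqrt (2*pi) * exp (- 1 * \<bar>x\<bar>)"
    by (simp add: std_normal_density_def divide_right_mono)
qed auto

lemma exponentially_bounded_logistic: "exponentially_bounded logistic_density"
proof (rule exponentially_boundedI)
  fix x :: real
  have pos: "1 + exp (- x) > 0" by (simp add: add_pos_pos)
  have "exp (- x) / (1 + exp (- x))^2 \<le> exp (- \<bar>x\<bar>)"
  proof (cases "x \<ge> 0")
    case True
    have "exp (- x) / (1 + exp (- x))^2 \<le> exp (- x) / 1"
      using pos by (intro divide_left_mono) (auto simp: one_le_power)
    thus ?thesis using True by simp
  next
    case False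
    have "exp (- x) / (1 + exp (- x))^2 \<le> exp (- x) / exp (- x)^2"
      using pos by (intro divide_left_mono power_mono) auto
    also have "\<dots> = exp x" by (simp add: power2_eq_square exp_minus field_simps)
    finally show ?thesis using False by simp
  qed
  thus "\<bar>logistic_density x\<bar> \<le> 1 * exp (- 1 * \<bar>x\<bar>)" by (simp add: logistic_density_def)
qed auto

lemma exponentially_bounded_laplace: "exponentially_bounded laplace_density"
  by (rule exponentially_boundedI[of "1/2" 1]) (auto simp: laplace_density_def)

lemma cosh_le_exp_abs: "cosh (x::real) \<le> exp \<bar>x\<bar>"
  by (cases "x \<ge> 0") (auto simp: cosh_field_def)

lemma besselK_nonneg: "besselK \<nu> z \<ge> 0"
  unfolding besselK_def set_lebesgue_integral_def by (intro integral_nonneg_AE) (simp add: indicator_def)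

lemma besselK_integrand_le:
  fixes z0 :: real assumes z0: "z0 > 0"
  obtains E where "E \<ge> 0"
    "\<And>z t. z \<ge> z0 \<Longrightarrow> t > 0 \<Longrightarrow> exp (- z * cosh t) * cosh (\<nu> * t) \<le> E * exp (- z / 2) * exp (- 1 * t)"
proof -
  obtain E where E: "E \<ge> 0" and E_le: "\<And>x. x \<ge> 1 \<Longrightarrow> x powr (\<bar>\<nu>\<bar> + 1) \<le> E * exp (z0 / 4 * x)"
    using powr_le_mult_exp[of "z0 / 4" 1 "\<bar>\<nu>\<bar> + 1"] z0 by auto
  have "exp (- z * cosh t) * cosh (\<nu> * t) \<le> E * exp (- z / 2) * exp (- 1 * t)"
    if z: "z \<ge> z0" and t: "t > 0" for z t
  proof -
    \<comment> \<open>Half of z cosh t gives the decay in z; the other half, with cosh t \<ge> e^t/2, kills cosh (\<nu> t).\<close>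
    have "z / 2 \<le> z / 2 * cosh t"
      using cosh_real_ge_1[of t] z z0 by simp
    moreover have "z0 / 2 * (exp t / 2) \<le> z / 2 * cosh t"
      using z z0 by (intro mult_mono) (auto simp: cosh_field_def)
    ultimately have decay: "exp (- z * cosh t) \<le> exp (- z / 2) * exp (- (z0 / 4 * exp t))"
      by (simp flip: exp_add)
    have "exp ((\<bar>\<nu>\<bar> + 1) * t) \<le> E * exp (z0 / 4 * exp t)"
      using E_le[of "exp t"] t by (simp add: powr_def mult.commute)
    moreover have "exp (- b) \<le> E * exp (- a)" if "exp a \<le> E * exp b" for a b
      using that by (simp add: exp_minus field_simps)
    ultimately have "exp (- (z0 / 4 * exp t)) \<le> E * exp (- ((\<bar>\<nu>\<bar> + 1) * t))"
      by blast
    with decay have "exp (- z * cosh t) \<le> exp (- z / 2) * (E * exp (- ((\<bar>\<nu>\<bar> + 1) * t)))"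
      by (rule order.trans[OF _ mult_left_mono]) simp
    moreover have "cosh (\<nu> * t) \<le> exp (\<bar>\<nu>\<bar> * t)"
      using cosh_le_exp_abs[of "\<nu> * t"] t by (simp add: abs_mult)
    ultimately have "exp (- z * cosh t) * cosh (\<nu> * t)
        \<le> exp (- z / 2) * (E * exp (- ((\<bar>\<nu>\<bar> + 1) * t))) * exp (\<bar>\<nu>\<bar> * t)"
      using E by (intro mult_mono) auto
    also have "\<dots> = E * exp (- z / 2) * exp (- 1 * t)"
      by (simp add: algebra_simps flip: exp_add)
    finally show ?thesis .
  qed
  with E show thesis by (rule that)
qed

lemma besselK_le_exp:
  fixes z0 :: real assumes "z0 > 0"
  obtains B where "B \<ge> 0" "\<And>z. z \<ge> z0 \<Longrightarrow> besselK \<nu> z \<le> B * exp (- z / 2)"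
proof -
  obtain E where E: "E \<ge> 0" and integrand_le:
    "\<And>z t. z \<ge> z0 \<Longrightarrow> t > 0 \<Longrightarrow> exp (- z * cosh t) * cosh (\<nu> * t) \<le> E * exp (- z / 2) * exp (- 1 * t)"
    using besselK_integrand_le[OF \<open>z0 > 0\<close>] by blast
  have "besselK \<nu> z \<le> E * exp (- z / 2)" if z: "z \<ge> z0" for z
  proof -
    have "(\<integral>\<^sup>+ t. ennreal (indicator {0<..} t *\<^sub>R (exp (- z * cosh t) * cosh (\<nu> * t))) \<partial>lborel)
        \<le> (\<integral>\<^sup>+ t. ennreal (indicator {0..} t * (E * exp (- z / 2) * exp (- 1 * t))) \<partial>lborel)"
      using integrand_le[OF z] E by (intro nn_integral_mono ennreal_leI) (auto simp: indicator_def)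
    also have "\<dots> = ennreal (E * exp (- z / 2))"
      using nn_integral_has_integral_lebesgue[OF _ has_integral_mult_right[OF
          has_integral_exp_minus_to_infinity[of 1 0]], of "E * exp (- z / 2)"] E
      by simp
    finally show ?thesis
      unfolding besselK_def set_lebesgue_integral_def using E by (intro integral_real_bounded) auto
  qed
  with E show thesis by (rule that)
qed

lemma exponentially_bounded_gh:
  assumes \<alpha>: "\<alpha> > 0" and \<delta>: "\<delta> > 0"
  shows "exponentially_bounded (gh_density lam \<alpha> \<delta>)"
proof -
  define \<nu> where "\<nu> = lam - 1/2"
  define K0 where "K0 = (\<alpha> / \<delta>) powr lam / (sqrt (2 * pi) * besselK lam (\<delta> * \<alpha>))"
  obtain B where B: "B \<ge> 0" "\<And>z. z \<ge> \<alpha> * \<delta> \<Longrightarrow> besselK \<nu> z \<le> B * exp (- z / 2)"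
    using besselK_le_exp[of "\<alpha> * \<delta>" \<nu>] \<alpha> \<delta> by auto
  obtain D where D: "D \<ge> 0" "\<And>x. x \<ge> \<delta> / \<alpha> \<Longrightarrow> x powr \<nu> \<le> D * exp (\<alpha>^2 / 4 * x)"
    using powr_le_mult_exp[of "\<alpha>^2 / 4" "\<delta> / \<alpha>" \<nu>] \<alpha> \<delta> by auto
  have "\<bar>gh_density lam \<alpha> \<delta> x\<bar> \<le> (\<bar>K0\<bar> * B * D + 1) * exp (- (\<alpha> / 4) * \<bar>x\<bar>)" for x
  proof -
    define u where "u = sqrt (\<delta>^2 + x^2)"
    have u\<delta>: "u \<ge> \<delta>" and ux: "u \<ge> \<bar>x\<bar>" unfolding u_def using \<delta> by (auto intro: real_le_rsqrt)
    have "(u / \<alpha>) powr \<nu> = inverse ((u / \<alpha>) powr (1/2 - lam))"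
      unfolding \<nu>_def by (subst powr_minus[symmetric]) simp
    hence "gh_density lam \<alpha> \<delta> x = K0 * besselK \<nu> (\<alpha> * u) * (u / \<alpha>) powr \<nu>"
      unfolding gh_density_def K0_def u_def[symmetric] \<nu>_def by (simp only: divide_inverse mult.assoc)
    hence "\<bar>gh_density lam \<alpha> \<delta> x\<bar> = \<bar>K0\<bar> * besselK \<nu> (\<alpha> * u) * (u / \<alpha>) powr \<nu>"
      by (simp add: abs_mult besselK_nonneg)
    also have "\<dots> \<le> \<bar>K0\<bar> * (B * exp (- (\<alpha> * u) / 2)) * (D * exp (\<alpha>^2 / 4 * (u / \<alpha>)))"
      using B(2)[of "\<alpha> * u"] D(2)[of "u / \<alpha>"] u\<delta> \<alpha> B(1)
      by (intro mult_mono mult_left_mono) (simp_all add: besselK_nonneg divide_right_mono)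
    also have "\<dots> = (\<bar>K0\<bar> * B * D) * exp (- (\<alpha> / 4) * u)"
      using \<alpha> by (simp add: power2_eq_square algebra_simps flip: exp_add)
    also have "\<dots> \<le> (\<bar>K0\<bar> * B * D + 1) * exp (- (\<alpha> / 4) * \<bar>x\<bar>)"
      using ux \<alpha> B(1) D(1) by (intro mult_mono) auto
    finally show ?thesis .
  qed
  moreover have "\<bar>K0\<bar> * B * D + 1 > 0" using B D by (simp add: add_nonneg_pos)
  ultimately show ?thesis using \<alpha> by (intro exponentially_boundedI[of _ "\<alpha> / 4"]) auto
qed

lemma exponentially_bounded_admissible:
  "admissible_base_density f \<Longrightarrow> exponentially_bounded f"
  unfolding admissible_base_density_def
  using exponentially_bounded_std_normal exponentially_bounded_logistic
    exponentially_bounded_laplace exponentially_bounded_gh by blast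

section \<open>Domination of the posterior\<close>

lemma residual_norm_coercive:
  fixes X :: "real^'p::finite^'n::finite" and y :: "real^'n"
  assumes "rank X = CARD('p)" and "y \<notin> range (\<lambda>\<beta>. X *v \<beta>)"
  obtains \<kappa> where "\<kappa> > 0" and "\<And>\<beta>. \<kappa> * (1 + norm \<beta>) \<le> norm (y - X *v \<beta>)"
proof -
  define L where "L = (\<lambda>(t::real, \<beta>). t *\<^sub>R y - X *v \<beta>)"
  have "linear L"
    by (rule linearI) (auto simp: L_def algebra_simps matrix_vector_right_distrib matrix_vector_mult_scaleR)
  moreover have "inj L"
    unfolding linear_injective_0[OF \<open>linear L\<close>]
  proof (intro allI impI)
    fix z :: "real \<times> (real^'p)"
    obtain t \<beta> where z: "z = (t, \<beta>)" by fastforce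
    assume "L z = 0"
    hence eq: "t *\<^sub>R y = X *v \<beta>" by (simp add: L_def z)
    have "t = 0"
    proof (rule ccontr)
      assume "t \<noteq> 0"
      hence "y = X *v ((1 / t) *\<^sub>R \<beta>)" using eq by (simp add: matrix_vector_mult_scaleR flip: eq)
      with assms(2) show False by blast
    qed
    moreover have "inj ((*v) X)" using assms(1) full_rank_injective by blast
    ultimately have "\<beta> = 0"
      using eq by (metis injD matrix_vector_mult_0_right scale_zero_left)
    with \<open>t = 0\<close> show "z = 0" by (simp add: z zero_prod_def)
  qed
  ultimately obtain B where B: "B > 0" "\<And>z. B * norm z \<le> norm (L z)"
    using linear_inj_bounded_below_pos by blast
  show thesis
  proof
    show "B / 2 > 0" using B(1) by simp
    fix \<beta> :: "real^'p"
    have "1 + norm \<beta> \<le> 2 * norm (1::real, \<beta>)"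
      using norm_fst_le[of "1::real" \<beta>] norm_snd_le[of \<beta> "1::real"] by simp
    hence "B / 2 * (1 + norm \<beta>) \<le> B * norm (1::real, \<beta>)" using B(1) by simp
    also have "\<dots> \<le> norm (y - X *v \<beta>)" using B(2)[of "(1, \<beta>)"] by (simp add: L_def)
    finally show "B / 2 * (1 + norm \<beta>) \<le> norm (y - X *v \<beta>)" .
  qed
qed

lemma tp_density_exp_bound:
  assumes f: "\<And>x. \<bar>f x\<bar> \<le> C * exp (- c * \<bar>x\<bar>)" and C: "C \<ge> 0" and c: "c \<ge> 0"
    and \<sigma>: "\<sigma> > 0" and ab: "a \<gamma> > 0" "b \<gamma> > 0"
  shows "\<bar>tp_density f a b \<mu> \<sigma> \<gamma> z\<bar>
    \<le> 2 * C / (\<sigma> * (a \<gamma> + b \<gamma>)) * exp (- c / (\<sigma> * max (a \<gamma>) (b \<gamma>)) * \<bar>z - \<mu>\<bar>)"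
proof -
  \<comment> \<open>Both halves are dominated by the flatter one, whose scale is the larger of a and b.\<close>
  have half_le: "\<bar>f ((z - \<mu>) / (\<sigma> * t))\<bar> \<le> C * exp (- c / (\<sigma> * max (a \<gamma>) (b \<gamma>)) * \<bar>z - \<mu>\<bar>)"
    if t: "t > 0" "t \<le> max (a \<gamma>) (b \<gamma>)" for t
  proof -
    have "\<bar>z - \<mu>\<bar> / (\<sigma> * max (a \<gamma>) (b \<gamma>)) \<le> \<bar>z - \<mu>\<bar> / (\<sigma> * t)"
      using t \<sigma> by (intro divide_left_mono mult_left_mono) auto
    hence "c * (\<bar>z - \<mu>\<bar> / (\<sigma> * max (a \<gamma>) (b \<gamma>))) \<le> c * (\<bar>z - \<mu>\<bar> / (\<sigma> * t))"
      using c by (rule mult_left_mono)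
    hence "exp (- c * \<bar>(z - \<mu>) / (\<sigma> * t)\<bar>) \<le> exp (- c / (\<sigma> * max (a \<gamma>) (b \<gamma>)) * \<bar>z - \<mu>\<bar>)"
      using t \<sigma> by (simp add: abs_divide abs_mult)
    thus ?thesis using f[of "(z - \<mu>) / (\<sigma> * t)"] C by (meson mult_left_mono order.trans)
  qed
  have "\<bar>tp_density f a b \<mu> \<sigma> \<gamma> z\<bar> = 2 / (\<sigma> * (a \<gamma> + b \<gamma>)) *
      \<bar>if z < \<mu> then f ((z - \<mu>) / (\<sigma> * b \<gamma>)) else f ((z - \<mu>) / (\<sigma> * a \<gamma>))\<bar>"
    unfolding tp_density_def using \<sigma> ab by (simp add: abs_mult)
  also have "\<dots> \<le> 2 / (\<sigma> * (a \<gamma> + b \<gamma>)) * (C * exp (- c / (\<sigma> * max (a \<gamma>) (b \<gamma>)) * \<bar>z - \<mu>\<bar>))"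
    using half_le[of "b \<gamma>"] half_le[of "a \<gamma>"] ab \<sigma> by (intro mult_left_mono) auto
  finally show ?thesis by simp
qed

lemma tp_likelihood_exp_bound:
  fixes X :: "real^'p^'n::finite" and y :: "real^'n"
  assumes "\<And>x. \<bar>f x\<bar> \<le> C * exp (- c * \<bar>x\<bar>)" "C \<ge> 0" "c \<ge> 0"
    and "\<sigma> > 0" "a \<gamma> > 0" "b \<gamma> > 0"
  shows "\<bar>tp_likelihood f a b X y \<beta> \<sigma> \<gamma>\<bar>
    \<le> (2 * C / (\<sigma> * (a \<gamma> + b \<gamma>))) ^ CARD('n)
       * exp (- c / (\<sigma> * max (a \<gamma>) (b \<gamma>)) * (\<Sum>j\<in>UNIV. \<bar>(y - X *v \<beta>) $ j\<bar>))"
proof -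
  have "\<bar>tp_likelihood f a b X y \<beta> \<sigma> \<gamma>\<bar>
      \<le> (\<Prod>j\<in>UNIV. 2 * C / (\<sigma> * (a \<gamma> + b \<gamma>))
           * exp (- c / (\<sigma> * max (a \<gamma>) (b \<gamma>)) * \<bar>(y - X *v \<beta>) $ j\<bar>))"
    unfolding tp_likelihood_def abs_prod
    using tp_density_exp_bound[where \<mu> = 0 and a = a and b = b and \<gamma> = \<gamma>, OF assms] by (intro prod_mono) auto
  also have "\<dots> = (2 * C / (\<sigma> * (a \<gamma> + b \<gamma>))) ^ CARD('n)
       * exp (- c / (\<sigma> * max (a \<gamma>) (b \<gamma>)) * (\<Sum>j\<in>UNIV. \<bar>(y - X *v \<beta>) $ j\<bar>))"
    by (simp only: prod.distrib prod_constant sum_distrib_left exp_sum finite)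
  finally show ?thesis .
qed

\<comment> \<open>The summand 1 comes from y being outside the column space of X; it is what makes the
  \<sigma>-integral converge at 0.\<close>
definition posterior_envelope :: "real \<Rightarrow> real \<Rightarrow> real \<Rightarrow> 'a::euclidean_space \<Rightarrow> real \<Rightarrow> real" where
  "posterior_envelope r w m \<beta> \<sigma> = \<sigma> powr (- r) * exp (- w / (\<sigma> * m) * (1 + (\<Sum>i\<in>Basis. \<bar>\<beta> \<bullet> i\<bar>)))"

lemma sum_abs_inner_Basis_le: "(\<Sum>i\<in>Basis. \<bar>x \<bullet> i\<bar>) \<le> DIM('a) * norm (x::'a::euclidean_space)"
proof -
  have "(\<Sum>i\<in>Basis. \<bar>x \<bullet> i\<bar>) \<le> (\<Sum>i\<in>(Basis::'a set). norm x)"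
    by (intro sum_mono Basis_le_norm)
  thus ?thesis by simp
qed

lemma tp_likelihood_le_coercive:
  fixes X :: "real^'p::finite^'n::finite" and y :: "real^'n"
  assumes f: "\<And>x. \<bar>f x\<bar> \<le> C * exp (- c * \<bar>x\<bar>)" and C: "C \<ge> 0" and c: "c \<ge> 0"
    and \<kappa>: "\<kappa> \<ge> 0" and coercive: "\<And>\<beta>. \<kappa> * (1 + norm \<beta>) \<le> norm (y - X *v \<beta>)"
    and \<sigma>: "\<sigma> > 0" and ab: "a \<gamma> > 0" "b \<gamma> > 0"
  shows "\<bar>tp_likelihood f a b X y \<beta> \<sigma> \<gamma>\<bar>
    \<le> (2 * C / (\<sigma> * (a \<gamma> + b \<gamma>))) ^ CARD('n)
       * exp (- (c * \<kappa> / CARD('p)) / (\<sigma> * max (a \<gamma>) (b \<gamma>)) * (1 + (\<Sum>i\<in>Basis. \<bar>\<beta> \<bullet> i\<bar>)))"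
proof -
  have "\<kappa> * (\<Sum>i\<in>Basis. \<bar>\<beta> \<bullet> i\<bar>) \<le> \<kappa> * (CARD('p) * norm \<beta>)"
    using sum_abs_inner_Basis_le[of \<beta>] \<kappa> by (intro mult_left_mono) simp_all
  moreover have "\<kappa> \<le> \<kappa> * CARD('p)" using \<kappa> by (simp add: mult_le_cancel_left1)
  ultimately have "\<kappa> / CARD('p) * (1 + (\<Sum>i\<in>Basis. \<bar>\<beta> \<bullet> i\<bar>)) \<le> \<kappa> * (1 + norm \<beta>)"
    by (simp add: field_simps)
  also have "\<dots> \<le> (\<Sum>j\<in>UNIV. \<bar>(y - X *v \<beta>) $ j\<bar>)"
    using coercive[of \<beta>] norm_le_l1_cart[of "y - X *v \<beta>"] by linarith
  finally have "c / (\<sigma> * max (a \<gamma>) (b \<gamma>)) * (\<kappa> / CARD('p) * (1 + (\<Sum>i\<in>Basis. \<bar>\<beta> \<bullet> i\<bar>)))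
      \<le> c / (\<sigma> * max (a \<gamma>) (b \<gamma>)) * (\<Sum>j\<in>UNIV. \<bar>(y - X *v \<beta>) $ j\<bar>)"
    using c \<sigma> ab by (intro mult_left_mono) simp_all
  hence "exp (- c / (\<sigma> * max (a \<gamma>) (b \<gamma>)) * (\<Sum>j\<in>UNIV. \<bar>(y - X *v \<beta>) $ j\<bar>))
      \<le> exp (- (c * \<kappa> / CARD('p)) / (\<sigma> * max (a \<gamma>) (b \<gamma>)) * (1 + (\<Sum>i\<in>Basis. \<bar>\<beta> \<bullet> i\<bar>)))"
    by (simp add: mult_ac)
  then show ?thesis
    using order.trans[OF tp_likelihood_exp_bound[where X = X and y = y and \<beta> = \<beta> and a = a and b = b
        and \<gamma> = \<gamma>, OF f C c \<sigma> ab] mult_left_mono] C \<sigma> ab by simp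
qed

lemma tp_posterior_le_envelope:
  fixes X :: "real^'p::finite^'n::finite" and y :: "real^'n" and q :: real
  assumes f: "\<And>x. \<bar>f x\<bar> \<le> C * exp (- c * \<bar>x\<bar>)" and C: "C \<ge> 0" and c: "c \<ge> 0"
    and \<kappa>: "\<kappa> \<ge> 0" and coercive: "\<And>\<beta>. \<kappa> * (1 + norm \<beta>) \<le> norm (y - X *v \<beta>)"
    and \<sigma>: "\<sigma> > 0" and ab: "a \<gamma> > 0" "b \<gamma> > 0" and \<pi>: "\<pi> \<gamma> \<ge> 0"
  shows "tp_likelihood f a b X y \<beta> \<sigma> \<gamma> * \<pi> \<gamma> / \<sigma> powr q
    \<le> (2 * C) ^ CARD('n) * (\<pi> \<gamma> / (a \<gamma> + b \<gamma>) ^ CARD('n))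
       * posterior_envelope (real CARD('n) + q) (c * \<kappa> / CARD('p)) (max (a \<gamma>) (b \<gamma>)) \<beta> \<sigma>"
proof -
  define E where "E = exp (- (c * \<kappa> / CARD('p)) / (\<sigma> * max (a \<gamma>) (b \<gamma>)) * (1 + (\<Sum>i\<in>Basis. \<bar>\<beta> \<bullet> i\<bar>)))"
  have "tp_likelihood f a b X y \<beta> \<sigma> \<gamma> * \<pi> \<gamma> / \<sigma> powr q
      \<le> \<bar>tp_likelihood f a b X y \<beta> \<sigma> \<gamma>\<bar> * \<pi> \<gamma> / \<sigma> powr q"
    using \<pi> by (intro divide_right_mono mult_right_mono abs_ge_self) simp_all
  also have "\<dots> \<le> (2 * C / (\<sigma> * (a \<gamma> + b \<gamma>))) ^ CARD('n) * E * \<pi> \<gamma> / \<sigma> powr q"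
    unfolding E_def using tp_likelihood_le_coercive[where a = a and b = b and \<gamma> = \<gamma>, OF f C c \<kappa> coercive \<sigma> ab] \<pi>
    by (intro divide_right_mono mult_right_mono) simp_all
  also have "\<dots> = (2 * C) ^ CARD('n) * (\<pi> \<gamma> / (a \<gamma> + b \<gamma>) ^ CARD('n))
        * posterior_envelope (real CARD('n) + q) (c * \<kappa> / CARD('p)) (max (a \<gamma>) (b \<gamma>)) \<beta> \<sigma>"
    unfolding posterior_envelope_def E_def[symmetric]
    using \<sigma> powr_minus_divide[of \<sigma> "real CARD('n) + q"]
    by (simp add: powr_add powr_realpow power_divide power_mult_distrib mult_ac)
  finally show ?thesis .
qed

section \<open>Integrating the envelope\<close>

lemma nn_integral_exp_neg_abs_le:
  fixes v :: real assumes v: "v > 0"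
  shows "(\<integral>\<^sup>+ t. ennreal (exp (- v * \<bar>t\<bar>)) \<partial>lborel) \<le> ennreal (2 / v)"
proof -
  have half: "(\<integral>\<^sup>+ t. ennreal (indicator {0..} t * exp (- v * t)) \<partial>lborel) = ennreal (1 / v)"
    using nn_integral_has_integral_lebesgue[OF _ has_integral_exp_minus_to_infinity[OF v, of 0]] by simp
  have reflected: "(\<integral>\<^sup>+ t. ennreal (indicator {0..} (- t) * exp (- v * (- t))) \<partial>lborel) = ennreal (1 / v)"
    using half by (subst lborel_distr_uminus[symmetric]) (simp add: nn_integral_distr)
  have "(\<integral>\<^sup>+ t. ennreal (exp (- v * \<bar>t\<bar>)) \<partial>lborel)
      \<le> (\<integral>\<^sup>+ t. ennreal (indicator {0..} t * exp (- v * t)) + ennreal (indicator {0..} (- t) * exp (- v * (- t))) \<partial>lborel)"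
    by (intro nn_integral_mono) (auto simp: indicator_def)
  also have "\<dots> = ennreal (2 / v)"
    using half reflected v by (subst nn_integral_add) (auto simp flip: ennreal_plus)
  finally show ?thesis .
qed

lemma nn_integral_exp_neg_l1_le:
  fixes v :: real assumes v: "v > 0"
  shows "(\<integral>\<^sup>+ x. ennreal (exp (- v * (\<Sum>b\<in>Basis. \<bar>x \<bullet> b\<bar>))) \<partial>(lborel :: 'a::euclidean_space measure))
     \<le> ennreal ((2 / v) ^ DIM('a))"
proof -
  have "(\<integral>\<^sup>+ x. ennreal (exp (- v * (\<Sum>b\<in>Basis. \<bar>x \<bullet> b\<bar>))) \<partial>(lborel :: 'a measure))
      = (\<integral>\<^sup>+ x. (\<Prod>b\<in>Basis. ennreal (exp (- v * \<bar>x \<bullet> b\<bar>))) \<partial>(lborel :: 'a measure))"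
    by (simp add: sum_distrib_left exp_sum prod_ennreal)
  also have "\<dots> = (\<Prod>b\<in>(Basis::'a set). \<integral>\<^sup>+ t. ennreal (exp (- v * \<bar>t\<bar>)) \<partial>lborel)"
    by (rule nn_integral_lborel_prod) auto
  also have "\<dots> \<le> ennreal (2 / v) ^ DIM('a)"
    unfolding prod_constant using v by (intro power_mono nn_integral_exp_neg_abs_le) auto
  also have "\<dots> = ennreal ((2 / v) ^ DIM('a))"
    using v by (simp add: ennreal_power)
  finally show ?thesis .
qed

lemma powr_neg_mult_exp_neg_inverse_le:
  fixes \<mu> B s :: real
  assumes "\<mu> > 0" "B > 0" "s > 0"
  shows "s powr (- \<mu>) * exp (- B / s) \<le> exp (\<mu> * (ln \<mu> - 1)) * B powr (- \<mu>)"
proof -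
  have "(B / s) powr \<mu> \<le> exp (\<mu> * (ln \<mu> - 1)) * exp (B / s)"
    using powr_le_const_mult_exp[of \<mu> 1 "B / s"] assms by simp
  moreover have "(B / s) powr \<mu> = B powr \<mu> * s powr (- \<mu>)"
    using assms by (subst powr_divide) (auto simp: powr_minus_divide)
  ultimately show ?thesis
    using assms by (simp add: powr_minus exp_minus field_simps)
qed

lemma nn_integral_powr_neg_mult_exp_neg_inverse_le:
  fixes \<mu> B :: real
  assumes \<mu>: "\<mu> > 1" and B: "B > 0"
  shows "(\<integral>\<^sup>+ s. ennreal (indicator {0<..} s * (s powr (- \<mu>) * exp (- B / s))) \<partial>lborel)
     \<le> ennreal ((exp (\<mu> * (ln \<mu> - 1)) + 1 / (\<mu> - 1)) * B powr (1 - \<mu>))"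
proof -
  define E where "E = exp (\<mu> * (ln \<mu> - 1))"
  have E: "E > 0" unfolding E_def by simp
  have near_zero: "(\<integral>\<^sup>+ s. ennreal (indicator {0..B} s * (E * B powr (- \<mu>))) \<partial>lborel)
      = ennreal (E * B powr (1 - \<mu>))"
    using nn_integral_has_integral_lebesgue[OF _ has_integral_const_real[of "E * B powr (- \<mu>)" 0 B]] B E
    by (simp add: powr_diff powr_minus field_simps)
  have tail: "(\<integral>\<^sup>+ s. ennreal (indicator {B..} s * s powr (- \<mu>)) \<partial>lborel)
      = ennreal (B powr (1 - \<mu>) / (\<mu> - 1))"
    using nn_integral_has_integral_lebesgue[OF _ has_integral_powr_to_inf[of "- \<mu>" B]] \<mu> B
    by (simp add: field_simps)
  have "(\<integral>\<^sup>+ s. ennreal (indicator {0<..} s * (s powr (- \<mu>) * exp (- B / s))) \<partial>lborel)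
     \<le> (\<integral>\<^sup>+ s. ennreal (indicator {0..B} s * (E * B powr (- \<mu>)))
          + ennreal (indicator {B..} s * s powr (- \<mu>)) \<partial>lborel)"
  proof (intro nn_integral_mono)
    fix s :: real
    have "s powr (- \<mu>) * exp (- B / s) \<le> E * B powr (- \<mu>)" if "s > 0"
      unfolding E_def using powr_neg_mult_exp_neg_inverse_le[of \<mu> B s] \<mu> B that by simp
    moreover have "s powr (- \<mu>) * exp (- B / s) \<le> s powr (- \<mu>)" if "s > 0"
      using B that by (simp add: mult_left_le)
    ultimately have "indicator {0<..} s * (s powr (- \<mu>) * exp (- B / s))
        \<le> indicator {0..B} s * (E * B powr (- \<mu>)) + indicator {B..} s * s powr (- \<mu>)"
      using E by (cases "s \<le> B") (auto simp: indicator_def intro: add_increasing add_increasing2)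
    then show "ennreal (indicator {0<..} s * (s powr (- \<mu>) * exp (- B / s)))
        \<le> ennreal (indicator {0..B} s * (E * B powr (- \<mu>))) + ennreal (indicator {B..} s * s powr (- \<mu>))"
      using E by (simp add: ennreal_leI flip: ennreal_plus)
  qed
  also have "\<dots> = ennreal (E * B powr (1 - \<mu>)) + ennreal (B powr (1 - \<mu>) / (\<mu> - 1))"
    using near_zero tail by (subst nn_integral_add) auto
  also have "\<dots> = ennreal ((E + 1 / (\<mu> - 1)) * B powr (1 - \<mu>))"
    using E \<mu> by (simp add: distrib_right flip: ennreal_plus)
  finally show ?thesis unfolding E_def .
qed

lemma nn_integral_posterior_envelope_beta_le:
  fixes r w m \<sigma> :: real
  assumes \<sigma>: "\<sigma> > 0" and m: "m > 0" and w: "w > 0"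
  shows "(\<integral>\<^sup>+ \<beta>. ennreal (posterior_envelope r w m (\<beta>::'a::euclidean_space) \<sigma>) \<partial>lborel)
     \<le> ennreal ((2 * m / w) ^ DIM('a) * (\<sigma> powr (- (r - DIM('a))) * exp (- (w / m) / \<sigma>)))"
proof -
  define v where "v = w / (\<sigma> * m)"
  have v: "v > 0" unfolding v_def using \<sigma> m w by simp
  have "posterior_envelope r w m \<beta> \<sigma> = \<sigma> powr (- r) * exp (- v) * exp (- v * (\<Sum>i\<in>Basis. \<bar>\<beta> \<bullet> i\<bar>))"
    for \<beta> :: 'a
    unfolding posterior_envelope_def v_def by (simp add: algebra_simps flip: exp_add)
  then have "(\<integral>\<^sup>+ \<beta>. ennreal (posterior_envelope r w m (\<beta>::'a) \<sigma>) \<partial>lborel)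
      = ennreal (\<sigma> powr (- r) * exp (- v))
        * (\<integral>\<^sup>+ \<beta>. ennreal (exp (- v * (\<Sum>i\<in>Basis. \<bar>\<beta> \<bullet> i\<bar>))) \<partial>(lborel :: 'a measure))"
    by (subst nn_integral_cmult[symmetric]) (auto simp: ennreal_mult)
  also have "\<dots> \<le> ennreal (\<sigma> powr (- r) * exp (- v)) * ennreal ((2 / v) ^ DIM('a))"
    by (intro mult_left_mono nn_integral_exp_neg_l1_le v) auto
  also have "\<dots> = ennreal ((2 * m / w) ^ DIM('a) * (\<sigma> powr (- (r - DIM('a))) * exp (- (w / m) / \<sigma>)))"
  proof -
    have "2 / v = 2 * m / w * \<sigma>" unfolding v_def using \<sigma> m w by (simp add: field_simps)
    then have power_eq: "(2 / v) ^ DIM('a) = (2 * m / w) ^ DIM('a) * \<sigma> ^ DIM('a)"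
      by (simp only: power_mult_distrib)
    have powr_eq: "\<sigma> powr (- (r - DIM('a))) = \<sigma> powr (- r) * \<sigma> ^ DIM('a)"
      using \<sigma> by (simp add: powr_realpow[symmetric] flip: powr_add)
    have exp_eq: "exp (- v) = exp (- (w / m) / \<sigma>)" unfolding v_def by simp
    have "\<sigma> powr (- r) * exp (- v) * (2 / v) ^ DIM('a)
        = (2 * m / w) ^ DIM('a) * (\<sigma> powr (- (r - DIM('a))) * exp (- (w / m) / \<sigma>))"
      unfolding power_eq powr_eq exp_eq by (simp only: mult_ac)
    then show ?thesis using v by (simp flip: ennreal_mult)
  qed
  finally show ?thesis .
qed

lemma nn_integral_posterior_envelope_le:
  fixes r w :: real
  assumes w: "w > 0" and r: "r - DIM('a::euclidean_space) > 1"
  obtains C where "C \<ge> 0" "\<And>m. m > 0 \<Longrightarrow>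
    (\<integral>\<^sup>+ \<sigma>. indicator {0<..} \<sigma> *
       (\<integral>\<^sup>+ \<beta>. ennreal (posterior_envelope r w m (\<beta>::'a) \<sigma>) \<partial>lborel) \<partial>lborel)
    \<le> ennreal (C * m powr (r - 1))"
proof
  define \<mu> where "\<mu> = r - DIM('a)"
  define D where "D = exp (\<mu> * (ln \<mu> - 1)) + 1 / (\<mu> - 1)"
  have \<mu>: "\<mu> > 1" using r unfolding \<mu>_def .
  have D: "D \<ge> 0" unfolding D_def using \<mu> by simp
  show "(2 / w) ^ DIM('a) * D * w powr (1 - \<mu>) \<ge> 0" using w D by simp
  fix m :: real assume m: "m > 0"
  have "(\<integral>\<^sup>+ \<sigma>. indicator {0<..} \<sigma> *
            (\<integral>\<^sup>+ \<beta>. ennreal (posterior_envelope r w m (\<beta>::'a) \<sigma>) \<partial>lborel) \<partial>lborel)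
      \<le> (\<integral>\<^sup>+ \<sigma>. ennreal ((2 * m / w) ^ DIM('a)) *
            ennreal (indicator {0<..} \<sigma> * (\<sigma> powr (- \<mu>) * exp (- (w / m) / \<sigma>))) \<partial>lborel)"
    using nn_integral_posterior_envelope_beta_le[OF _ m w, where 'a = 'a] m w
    by (intro nn_integral_mono) (auto simp: indicator_def \<mu>_def simp flip: ennreal_mult')
  also have "\<dots> = ennreal ((2 * m / w) ^ DIM('a)) *
         (\<integral>\<^sup>+ \<sigma>. ennreal (indicator {0<..} \<sigma> * (\<sigma> powr (- \<mu>) * exp (- (w / m) / \<sigma>))) \<partial>lborel)"
    by (rule nn_integral_cmult) measurable
  also have "\<dots> \<le> ennreal ((2 * m / w) ^ DIM('a)) * ennreal (D * (w / m) powr (1 - \<mu>))"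
    unfolding D_def using \<mu> m w by (intro mult_left_mono nn_integral_powr_neg_mult_exp_neg_inverse_le) auto
  also have "\<dots> = ennreal ((2 / w) ^ DIM('a) * D * w powr (1 - \<mu>) * m powr (r - 1))"
  proof -
    have "m ^ DIM('a) * (w / m) powr (1 - \<mu>) = w powr (1 - \<mu>) * m powr (r - 1)"
      using m w by (simp add: \<mu>_def powr_divide powr_realpow[symmetric] powr_diff powr_add field_simps)
    then show ?thesis
      using m w D by (simp add: power_mult_distrib power_divide mult_ac flip: ennreal_mult)
  qed
  finally show "(\<integral>\<^sup>+ \<sigma>. indicator {0<..} \<sigma> *
            (\<integral>\<^sup>+ \<beta>. ennreal (posterior_envelope r w m (\<beta>::'a) \<sigma>) \<partial>lborel) \<partial>lborel)
      \<le> ennreal ((2 / w) ^ DIM('a) * D * w powr (1 - \<mu>) * m powr (r - 1))" .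
qed

lemma nn_integral_posterior_envelope_iterated:
  fixes K M :: "real \<Rightarrow> real" and \<Gamma> :: "real set" and k r w :: real
  assumes [measurable]: "\<Gamma> \<in> sets borel" "K \<in> borel_measurable borel" "M \<in> borel_measurable borel"
    and nonneg: "\<And>\<gamma>. \<gamma> \<in> \<Gamma> \<Longrightarrow> k * K \<gamma> \<ge> 0"
  shows "(\<integral>\<^sup>+ (\<beta>, \<sigma>, \<gamma>). indicator (UNIV \<times> {0<..} \<times> \<Gamma>) (\<beta>, \<sigma>, \<gamma>) *
            ennreal (k * K \<gamma> * posterior_envelope r w (M \<gamma>) (\<beta>::'a::euclidean_space) \<sigma>)
          \<partial>(lborel \<Otimes>\<^sub>M lborel \<Otimes>\<^sub>M lborel))
      = (\<integral>\<^sup>+ \<gamma>. ennreal (k * K \<gamma>) * indicator \<Gamma> \<gamma> * (\<integral>\<^sup>+ \<sigma>. indicator {0<..} \<sigma> *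
           (\<integral>\<^sup>+ \<beta>. ennreal (posterior_envelope r w (M \<gamma>) (\<beta>::'a) \<sigma>) \<partial>lborel) \<partial>lborel) \<partial>lborel)"
proof -
  interpret \<sigma>\<gamma>: sigma_finite_measure "lborel \<Otimes>\<^sub>M lborel :: (real \<times> real) measure"
    by (intro sigma_finite_pair_measure lborel.sigma_finite_measure_axioms)
  interpret \<beta>\<sigma>\<gamma>: pair_sigma_finite "lborel :: 'a measure" "lborel \<Otimes>\<^sub>M lborel :: (real \<times> real) measure" ..
  have integrand_eq: "indicator (UNIV \<times> {0<..} \<times> \<Gamma>) (\<beta>, \<sigma>, \<gamma>) * ennreal (k * K \<gamma> * posterior_envelope r w (M \<gamma>) \<beta> \<sigma>)
    = ennreal (k * K \<gamma>) * indicator \<Gamma> \<gamma> * (indicator {0<..} \<sigma> * ennreal (posterior_envelope r w (M \<gamma>) \<beta> \<sigma>))"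
    for \<beta> :: 'a and \<sigma> \<gamma>
    using nonneg[of \<gamma>] by (auto simp: indicator_def ennreal_mult')
  show ?thesis
    unfolding integrand_eq
    by (subst \<beta>\<sigma>\<gamma>.nn_integral_snd[symmetric], simp add: posterior_envelope_def,
        subst lborel_pair.nn_integral_snd[symmetric], simp add: posterior_envelope_def)
       (simp add: nn_integral_cmult posterior_envelope_def)
qed

lemma nn_integral_posterior_envelope_finite:
  fixes K M :: "real \<Rightarrow> real" and \<Gamma> :: "real set" and k r w :: real
  assumes [measurable]: "\<Gamma> \<in> sets borel" "K \<in> borel_measurable borel" "M \<in> borel_measurable borel"
    and KM: "\<And>\<gamma>. \<gamma> \<in> \<Gamma> \<Longrightarrow> K \<gamma> \<ge> 0 \<and> M \<gamma> > 0"
    and k: "k \<ge> 0" and w: "w > 0" and r: "r - DIM('a) > 1"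
    and fin: "(\<integral>\<^sup>+ \<gamma>. indicator \<Gamma> \<gamma> * ennreal (K \<gamma> * M \<gamma> powr (r - 1)) \<partial>lborel) < \<infinity>"
  shows "(\<integral>\<^sup>+ (\<beta>, \<sigma>, \<gamma>). indicator (UNIV \<times> {0<..} \<times> \<Gamma>) (\<beta>, \<sigma>, \<gamma>) *
            ennreal (k * K \<gamma> * posterior_envelope r w (M \<gamma>) (\<beta>::'a::euclidean_space) \<sigma>)
          \<partial>(lborel \<Otimes>\<^sub>M lborel \<Otimes>\<^sub>M lborel)) < \<infinity>"
proof -
  obtain C where C: "C \<ge> 0" and inner_le: "\<And>m. m > 0 \<Longrightarrow>
    (\<integral>\<^sup>+ \<sigma>. indicator {0<..} \<sigma> *
       (\<integral>\<^sup>+ \<beta>. ennreal (posterior_envelope r w m (\<beta>::'a) \<sigma>) \<partial>lborel) \<partial>lborel)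
    \<le> ennreal (C * m powr (r - 1))"
    using nn_integral_posterior_envelope_le[OF w r] by blast
  have "ennreal (k * K \<gamma>) * indicator \<Gamma> \<gamma> * (\<integral>\<^sup>+ \<sigma>. indicator {0<..} \<sigma> *
           (\<integral>\<^sup>+ \<beta>. ennreal (posterior_envelope r w (M \<gamma>) (\<beta>::'a) \<sigma>) \<partial>lborel) \<partial>lborel)
        \<le> ennreal (k * C) * (indicator \<Gamma> \<gamma> * ennreal (K \<gamma> * M \<gamma> powr (r - 1)))" for \<gamma>
  proof (cases "\<gamma> \<in> \<Gamma>")
    case True
    with KM have "K \<gamma> \<ge> 0" "M \<gamma> > 0" by auto
    have "ennreal (k * K \<gamma>) * (\<integral>\<^sup>+ \<sigma>. indicator {0<..} \<sigma> *
         (\<integral>\<^sup>+ \<beta>. ennreal (posterior_envelope r w (M \<gamma>) (\<beta>::'a) \<sigma>) \<partial>lborel) \<partial>lborel)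
      \<le> ennreal (k * K \<gamma>) * ennreal (C * M \<gamma> powr (r - 1))"
      using \<open>M \<gamma> > 0\<close> by (intro mult_left_mono inner_le) auto
    also have "\<dots> = ennreal (k * C) * ennreal (K \<gamma> * M \<gamma> powr (r - 1))"
      using \<open>K \<gamma> \<ge> 0\<close> k C by (simp add: mult_ac flip: ennreal_mult')
    finally show ?thesis using True by simp
  qed simp
  then have "(\<integral>\<^sup>+ (\<beta>, \<sigma>, \<gamma>). indicator (UNIV \<times> {0<..} \<times> \<Gamma>) (\<beta>, \<sigma>, \<gamma>) *
            ennreal (k * K \<gamma> * posterior_envelope r w (M \<gamma>) (\<beta>::'a) \<sigma>)
          \<partial>(lborel \<Otimes>\<^sub>M lborel \<Otimes>\<^sub>M lborel))
      \<le> (\<integral>\<^sup>+ \<gamma>. ennreal (k * C) * (indicator \<Gamma> \<gamma> * ennreal (K \<gamma> * M \<gamma> powr (r - 1))) \<partial>lborel)"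
    using KM k by (subst nn_integral_posterior_envelope_iterated) (auto intro!: nn_integral_mono)
  also have "\<dots> = ennreal (k * C) * (\<integral>\<^sup>+ \<gamma>. indicator \<Gamma> \<gamma> * ennreal (K \<gamma> * M \<gamma> powr (r - 1)) \<partial>lborel)"
    by (rule nn_integral_cmult) measurable
  also have "\<dots> < \<infinity>"
    using fin by (simp add: ennreal_mult_less_top)
  finally show ?thesis .
qed

theorem corollary3p3:
  fixes f :: "real \<Rightarrow> real"
    and a b \<pi> :: "real \<Rightarrow> real"
    and \<Gamma> :: "real set"
    and q :: real
    and X :: "real^'p::finite^'n::finite"
    and y :: "real^'n"
  assumes f: "admissible_base_density f"
    and \<Gamma>_meas: "\<Gamma> \<in> sets borel"
    and a_meas: "a \<in> borel_measurable borel" and b_meas: "b \<in> borel_measurable borel"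
    and ab_pos: "\<And>\<gamma>. \<gamma> \<in> \<Gamma> \<Longrightarrow> a \<gamma> > 0 \<and> b \<gamma> > 0"
    and \<pi>_meas: "\<pi> \<in> borel_measurable borel"
    and \<pi>_nonneg: "\<And>\<gamma>. \<gamma> \<in> \<Gamma> \<Longrightarrow> \<pi> \<gamma> \<ge> 0"
    and \<pi>_proper: "(\<integral>\<^sup>+ \<gamma>. indicator \<Gamma> \<gamma> * ennreal (\<pi> \<gamma>) \<partial>lborel) = 1"
    and q: "q \<ge> 0"
    and full_rank: "rank X = CARD('p)"
    and y_notin: "y \<notin> range (\<lambda>\<beta>. X *v \<beta>)"
    and n_gt: "real CARD('n) > real CARD('p) + 1 - q"
    and int_fin: "(\<integral>\<^sup>+ \<gamma>. indicator \<Gamma> \<gamma> *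
         ennreal (max (a \<gamma>) (b \<gamma>) powr (real CARD('n) + q - 1) / (a \<gamma> + b \<gamma>) ^ CARD('n) * \<pi> \<gamma>)
         \<partial>lborel) < \<infinity>"
  shows "posterior_proper f a b \<Gamma> \<pi> q X y"
proof -
  note [measurable] = \<Gamma>_meas a_meas b_meas \<pi>_meas
  obtain C c where "C > 0" "c > 0" and f_le: "\<And>x. \<bar>f x\<bar> \<le> C * exp (- c * \<bar>x\<bar>)"
    using exponentially_bounded_admissible[OF f] unfolding exponentially_bounded_def by blast
  obtain \<kappa> where "\<kappa> > 0" and coercive: "\<And>\<beta>. \<kappa> * (1 + norm \<beta>) \<le> norm (y - X *v \<beta>)"
    using residual_norm_coercive[OF full_rank y_notin] by blast
  define K where "K \<gamma> = \<pi> \<gamma> / (a \<gamma> + b \<gamma>) ^ CARD('n)" for \<gamma>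
  define M where "M \<gamma> = max (a \<gamma>) (b \<gamma>)" for \<gamma>
  have "(\<integral>\<^sup>+ (\<beta>, \<sigma>, \<gamma>). indicator (UNIV \<times> {0<..} \<times> \<Gamma>) (\<beta>, \<sigma>, \<gamma>) *
          ennreal (tp_likelihood f a b X y \<beta> \<sigma> \<gamma> * \<pi> \<gamma> / \<sigma> powr q) \<partial>(lborel \<Otimes>\<^sub>M lborel \<Otimes>\<^sub>M lborel))
      \<le> (\<integral>\<^sup>+ (\<beta>, \<sigma>, \<gamma>). indicator (UNIV \<times> {0<..} \<times> \<Gamma>) (\<beta>, \<sigma>, \<gamma>) *
          ennreal ((2 * C) ^ CARD('n) * K \<gamma> *
            posterior_envelope (real CARD('n) + q) (c * \<kappa> / CARD('p)) (M \<gamma>) (\<beta>::real^'p) \<sigma>)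
          \<partial>(lborel \<Otimes>\<^sub>M lborel \<Otimes>\<^sub>M lborel))"
    by (intro nn_integral_mono)
       (use tp_posterior_le_envelope[OF f_le _ _ _ coercive] ab_pos \<pi>_nonneg \<open>C > 0\<close> \<open>c > 0\<close> \<open>\<kappa> > 0\<close>
         in \<open>auto simp: indicator_def K_def M_def intro!: ennreal_leI\<close>)
  also have "\<dots> < \<infinity>"
  proof (rule nn_integral_posterior_envelope_finite)
    show "(\<integral>\<^sup>+ \<gamma>. indicator \<Gamma> \<gamma> * ennreal (K \<gamma> * M \<gamma> powr (real CARD('n) + q - 1)) \<partial>lborel) < \<infinity>"
      using int_fin by (simp add: K_def M_def mult_ac)
  qed (use \<open>C > 0\<close> \<open>c > 0\<close> \<open>\<kappa> > 0\<close> n_gt in \<open>auto simp: K_def M_def less_max_iff_disj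
         dest: ab_pos \<pi>_nonneg intro!: divide_nonneg_pos add_pos_pos\<close>)
  finally show ?thesis unfolding posterior_proper_def .
qed

end
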